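(* Let $n\ge 1$, $N=2^n$ and $s=(N-1)/2$. Let $0\le j<N/2$ be an integer and let $z\in\tilde\Xi^{(N)}_j$, i.e. $z=W^{(N)}_j\oplus e$ for some $e\in\{0,1\}^N$ with Hamming weight $|e|<N/4$ and $e\preccurlyeq W^{(N)}_{N-1}$. Then $$\hat H^{\otimes n}\,\hat U_z\,\hat H^{\otimes n}\left(\left|\tfrac12\right\rangle_s+\left|-\tfrac12\right\rangle_s\right)=\left|\tfrac12+j\right\rangle_s+\left|-\tfrac12-j\right\rangle_s .$$
   Context: Work in $\mathbb{C}^N$ with computational basis $\{|y\rangle : y=0,\dots,N-1\}$. The spin basis states $|m\rangle_s$, $m\in\{-s,\dots,s\}$, are identified with computational basis states via $|m\rangle_s=|m+s\rangle$. For $x,y\in\{0,\dots,N-1\}$ let $x\cdot y\in\{0,1\}$ be the inner product modulo 2 of their $n$-bit binary expansions. $\hat H^{\otimes n}|y\rangle=N^{-1/2}\sum_{x=0}^{N-1}(-1)^{x\cdot y}|x\rangle$. The Hadamard codeword $W^{(N)}_j\in\{0,1\}^N$ has bit $x\cdot j$ at position $x\in\{0,\dots,N-1\}$; in particular $W^{(N)}_{N-1}$ has a 1 exactly at the positions $x$ whose binary expansion has an odd number of ones. For $a,b\in\{0,1\}^N$, $a\preccurlyeq b$ means: whenever $a_x=1$ then $b_x=1$. $\oplus$ is bitwise addition mod 2. For $z\in\{0,1\}^N$, $\hat U_z$ is the diagonal unitary $\hat U_z|x\rangle=(-1)^{z_x}|x\rangle$. The set $\tilde\Xi^{(N)}_j$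 (codewords with restricted errors) is the set of strings $W^{(N)}_j\oplus e$ with $e\preccurlyeq W^{(N)}_{N-1}$ and $|e|\in\{0,1,\dots,N/4-1\}$. *)

theory Defs
  imports Complex_Main
begin

text \<open>Vectors in C^N (N = 2^n) are functions nat => complex; entries at indices >= N are 0.
  Binary strings in {0,1}^N are functions nat => bool, only positions x < N matter.\<close>

definition bdot :: "nat \<Rightarrow> nat \<Rightarrow> nat \<Rightarrow> nat" where
  "bdot n x y = (\<Sum>i<n. if bit x i \<and> bit y i then 1 else 0) mod 2"

definition hadamard_n :: "nat \<Rightarrow> (nat \<Rightarrow> complex) \<Rightarrow> (nat \<Rightarrow> complex)" where
  "hadamard_n n v = (\<lambda>x. if x < 2^n then
      complex_of_real (1 / sqrt (2^n)) * (\<Sum>y<2^n. (-1) ^ (bdot n x y) * v y) else 0)"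

definition U_diag :: "nat \<Rightarrow> (nat \<Rightarrow> bool) \<Rightarrow> (nat \<Rightarrow> complex) \<Rightarrow> (nat \<Rightarrow> complex)" where
  "U_diag n z v = (\<lambda>x. if x < 2^n then (if z x then -1 else 1) * v x else 0)"

definition spin_ket :: "nat \<Rightarrow> real \<Rightarrow> (nat \<Rightarrow> complex)" where
  "spin_ket n m = (\<lambda>x. if x < 2^n \<and> real x = m + (2^n - 1) / 2 then 1 else 0)"

definition hadamard_codeword :: "nat \<Rightarrow> nat \<Rightarrow> (nat \<Rightarrow> bool)" where
  "hadamard_codeword n j = (\<lambda>x. bdot n x j = 1)"

definition preceq :: "nat \<Rightarrow> (nat \<Rightarrow> bool) \<Rightarrow> (nat \<Rightarrow> bool) \<Rightarrow> bool" where
  "preceq n a b \<longleftrightarrow> (\<forall>x<2^n. a x \<longrightarrow> b x)"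

definition hweight :: "nat \<Rightarrow> (nat \<Rightarrow> bool) \<Rightarrow> nat" where
  "hweight n e = card {x. x < 2^n \<and> e x}"

definition xor_str :: "nat \<Rightarrow> (nat \<Rightarrow> bool) \<Rightarrow> (nat \<Rightarrow> bool) \<Rightarrow> (nat \<Rightarrow> bool)" where
  "xor_str n a b = (\<lambda>x. x < 2^n \<and> a x \<noteq> b x)"

definition Xi_tilde :: "nat \<Rightarrow> nat \<Rightarrow> (nat \<Rightarrow> bool) set" where
  "Xi_tilde n j = {xor_str n (hadamard_codeword n j) e | e.
      preceq n e (hadamard_codeword n (2^n - 1)) \<and> real (hweight n e) < real (2^n) / 4}"

end

theory Submission
  imports Defs
begin

text \<open>The Walsh characters \<open>x \<mapsto> (-1)^(x\<cdot>y)\<close> are multiplicative in \<open>y\<close> under XOR and orthogonal,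
  so \<open>H\<^sup>\<otimes>\<^sup>n\<close> is an involution. With \<open>N = 2p\<close> and \<open>m = N - 1\<close> the input state is
  \<open>|p\<rangle> + |p \<oplus> m\<rangle>\<close>, whose Hadamard transform is \<open>(-1)^(x\<cdot>p) (1 + (-1)^(x\<cdot>m))\<close>; it vanishes
  wherever \<open>W\<^sub>N\<^sub>-\<^sub>1\<close> has a one. Off that support the error \<open>e\<close> is zero, so \<open>U\<^sub>z\<close> multiplies by
  \<open>(-1)^(x\<cdot>j)\<close> there, which turns the state into the transform of \<open>|p \<oplus> j\<rangle> + |p \<oplus> j \<oplus> m\<rangle>\<close>.
  Applying \<open>H\<^sup>\<otimes>\<^sup>n\<close> again and using \<open>p \<oplus> j = p + j\<close> for \<open>j < p\<close> gives the claim.\<close>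

lemma bit_nat_less_two_power: "(x::nat) < 2^n \<Longrightarrow> bit x i \<Longrightarrow> i < n"
  by (metis bit_take_bit_iff take_bit_nat_eq_self)

lemma xor_nat_less_two_power: "(a::nat) < 2^n \<Longrightarrow> b < 2^n \<Longrightarrow> xor a b < 2^n"
  by (metis take_bit_nat_eq_self_iff take_bit_xor)

lemma nat_eq_iff_low_bits:
  "(x::nat) < 2^n \<Longrightarrow> y < 2^n \<Longrightarrow> x = y \<longleftrightarrow> (\<forall>i<n. bit x i = bit y i)"
  by (metis bit_eq_iff bit_nat_less_two_power)

lemma add_xor_mask_nat: "(a::nat) < 2^n \<Longrightarrow> a + xor a (2^n - 1) = 2^n - 1"
proof -
  assume "a < 2^n"
  then have "and a (xor a (mask n)) = 0" "xor a (xor a (mask n)) = mask n"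
    by (auto simp: bit_eq_iff bit_simps dest: bit_nat_less_two_power)
  then show ?thesis by (metis disjunctive_add_eq_xor mask_eq_exp_minus_1)
qed

lemma sum_lessThan_double:
  "(\<Sum>x<k + k. f x) = (\<Sum>x<k. f x) + (\<Sum>x<k. f (x + k::nat))"
proof -
  have "(\<Sum>x<k + k. f x) = (\<Sum>x<k. f x) + (\<Sum>x\<in>{k..<k + k}. f x)"
    by (simp add: atLeast0LessThan[symmetric] sum.atLeastLessThan_concat)
  also have "(\<Sum>x\<in>{k..<k + k}. f x) = (\<Sum>x<k. f (x + k))"
    using sum.shift_bounds_nat_ivl[of f 0 k k] by (simp add: atLeast0LessThan)
  finally show ?thesis .
qed

definition walsh :: "nat \<Rightarrow> nat \<Rightarrow> nat \<Rightarrow> complex" where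
  "walsh n x y = (-1) ^ bdot n x y"

lemma walsh_eq_power_count:
  "walsh n x y = (-1) ^ (\<Sum>i<n. if bit x i \<and> bit y i then 1 else 0)"
  unfolding walsh_def bdot_def by (simp add: minus_one_power_iff)

lemma walsh_eq_sign_codeword: "walsh n x y = (if hadamard_codeword n y x then -1 else 1)"
  unfolding walsh_def hadamard_codeword_def bdot_def by (auto simp: mod_2_eq_odd)

lemma walsh_commute: "walsh n x y = walsh n y x"
  unfolding walsh_eq_power_count by (simp add: conj_commute)

lemma walsh_xor: "walsh n x (xor a b) = walsh n x a * walsh n x b"
proof -
  have "(\<Sum>i<n. if bit x i \<and> bit a i then 1 else 0) + (\<Sum>i<n. if bit x i \<and> bit b i then 1 else 0)
      = (\<Sum>i<n. if bit x i \<and> bit (xor a b) i then 1 else 0)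
        + 2 * (\<Sum>i<n. if bit x i \<and> bit a i \<and> bit b i then 1 else (0::nat))"
    unfolding sum.distrib[symmetric] sum_distrib_left
    by (rule sum.cong) (auto simp: bit_xor_iff)
  then have "(-1::complex) ^ ((\<Sum>i<n. if bit x i \<and> bit a i then 1 else 0)
      + (\<Sum>i<n. if bit x i \<and> bit b i then 1 else 0))
      = (-1) ^ (\<Sum>i<n. if bit x i \<and> bit (xor a b) i then 1 else 0)"
    by (simp add: power_add power_mult)
  then show ?thesis
    unfolding walsh_eq_power_count by (simp add: power_add)
qed

lemma sum_walsh: "(\<Sum>x<2^n. walsh n x a) = (if \<forall>i<n. \<not> bit a i then 2^n else 0)"
proof (induction n)
  case 0
  then show ?case by (simp add: walsh_eq_power_count)
next
  case (Suc n)
  have low: "walsh (Suc n) x a = walsh n x a" if "x < 2^n" for x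
    using bit_nat_less_two_power[OF that] by (auto simp: walsh_eq_power_count)
  have bit_high: "bit (x + 2^n) i \<longleftrightarrow> bit x i \<or> i = n" if "x < 2^n" for x i :: nat
    using bit_nat_less_two_power[OF that]
    by (subst bit_disjunctive_add_iff) (auto simp: bit_exp_iff)
  have high: "walsh (Suc n) (x + 2^n) a = walsh n x a * (if bit a n then -1 else 1)" if "x < 2^n" for x
  proof -
    have "(\<Sum>i<n. if bit (x + 2^n) i \<and> bit a i then 1 else 0)
        = (\<Sum>i<n. if bit x i \<and> bit a i then 1 else (0::nat))"
      by (rule sum.cong) (auto simp: bit_high[OF that])
    then show ?thesis using bit_high[OF that] by (simp add: walsh_eq_power_count)
  qed
  have "(\<Sum>x<2^Suc n. walsh (Suc n) x a)
      = (\<Sum>x<2^n. walsh (Suc n) x a) + (\<Sum>x<2^n. walsh (Suc n) (x + 2^n) a)"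
    using sum_lessThan_double[of "\<lambda>x. walsh (Suc n) x a" "2^n"] by (simp add: mult_2)
  also have "\<dots> = (\<Sum>x<2^n. walsh n x a) * (1 + (if bit a n then -1 else 1))"
    by (simp add: low high sum_distrib_right[symmetric] distrib_left)
  also have "\<dots> = (if \<forall>i<Suc n. \<not> bit a i then 2^Suc n else 0)"
    unfolding Suc.IH by (auto simp: less_Suc_eq)
  finally show ?case .
qed

lemma walsh_orthogonal:
  assumes "a < 2^n" and "b < 2^n"
  shows "(\<Sum>x<2^n. walsh n x a * walsh n x b) = (if a = b then 2^n else 0)"
  using nat_eq_iff_low_bits[OF assms]
  by (simp add: walsh_xor[symmetric] sum_walsh bit_xor_iff)

lemma hadamard_n_involutive:
  assumes "\<And>x. 2^n \<le> x \<Longrightarrow> v x = 0"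
  shows "hadamard_n n (hadamard_n n v) = v"
proof
  fix y
  define c where "c = complex_of_real (1 / sqrt (2^n))"
  have c: "c * c * 2^n = 1"
    unfolding c_def by (simp flip: of_real_mult)
  show "hadamard_n n (hadamard_n n v) y = v y"
  proof (cases "y < 2^n")
    case True
    have Hw: "hadamard_n n w x = c * (\<Sum>k<2^n. walsh n x k * w k)" if "x < 2^n" for w x
      using that by (simp add: hadamard_n_def walsh_def c_def)
    have "hadamard_n n (hadamard_n n v) y
        = c * (\<Sum>x<2^n. walsh n x y * (c * (\<Sum>k<2^n. walsh n x k * v k)))"
      by (simp add: Hw True walsh_commute[of n y] cong: sum.cong_simp)
    also have "\<dots> = c * c * (\<Sum>x<2^n. \<Sum>k<2^n. v k * (walsh n x y * walsh n x k))"
      by (simp add: sum_distrib_left mult_ac)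
    also have "\<dots> = c * c * (\<Sum>k<2^n. v k * (\<Sum>x<2^n. walsh n x y * walsh n x k))"
      by (subst sum.swap) (simp add: sum_distrib_left)
    also have "\<dots> = c * c * (\<Sum>k<2^n. if k = y then v y * 2^n else 0)"
      by (intro arg_cong[where f = "(*) (c * c)"] sum.cong) (auto simp: walsh_orthogonal True)
    finally show ?thesis using True c by (simp add: mult_ac)
  qed (simp add: hadamard_n_def assms)
qed

definition ket :: "nat \<Rightarrow> nat \<Rightarrow> complex" where
  "ket k = (\<lambda>x. if x = k then 1 else 0)"

lemma spin_ket_eq_ket: "k < 2^n \<Longrightarrow> real k = r + (2^n - 1) / 2 \<Longrightarrow> spin_ket n r = ket k"
  unfolding spin_ket_def ket_def by auto

lemma sum_mult_ket: "finite A \<Longrightarrow> k \<in> A \<Longrightarrow> (\<Sum>y\<in>A. f y * ket k y) = f k"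
  by (simp add: ket_def if_distrib[of "(*) _"] cong: if_cong)

lemma hadamard_n_ket_pair:
  assumes "a < 2^n" and "b < 2^n" and "x < 2^n"
  shows "hadamard_n n (\<lambda>y. ket a y + ket b y) x
       = complex_of_real (1 / sqrt (2^n)) * (walsh n x a + walsh n x b)"
proof -
  have "(\<Sum>y<2^n. walsh n x y * (ket a y + ket b y)) = walsh n x a + walsh n x b"
    using assms by (simp add: distrib_left sum.distrib sum_mult_ket)
  then show ?thesis using assms(3) by (simp add: hadamard_n_def walsh_def)
qed

lemma restricted_error_sign:
  assumes "preceq n e (hadamard_codeword n (2^n - 1))" and "x < 2^n"
  shows "(if xor_str n (hadamard_codeword n j) e x then -1 else 1) * (1 + walsh n x (2^n - 1))
       = walsh n x j * (1 + walsh n x (2^n - 1))"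
  using assms unfolding preceq_def xor_str_def by (auto simp: walsh_eq_sign_codeword)

lemma U_diag_hadamard_pair:
  assumes e: "preceq n e (hadamard_codeword n (2^n - 1))" and "a < 2^n" and "j < 2^n"
  defines "m \<equiv> 2^n - 1"
  shows "U_diag n (xor_str n (hadamard_codeword n j) e) (hadamard_n n (\<lambda>y. ket a y + ket (xor a m) y))
       = hadamard_n n (\<lambda>y. ket (xor a j) y + ket (xor (xor a j) m) y)"
proof
  fix x
  have m: "m < 2^n" and aj: "xor a j < 2^n"
    using assms by (simp_all add: xor_nat_less_two_power)
  show "U_diag n (xor_str n (hadamard_codeword n j) e) (hadamard_n n (\<lambda>y. ket a y + ket (xor a m) y)) x
      = hadamard_n n (\<lambda>y. ket (xor a j) y + ket (xor (xor a j) m) y) x"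
  proof (cases "x < 2^n")
    case True
    have "walsh n x a + walsh n x (xor a m) = walsh n x a * (1 + walsh n x m)"
      by (simp add: walsh_xor algebra_simps)
    moreover have "walsh n x (xor a j) + walsh n x (xor (xor a j) m)
        = walsh n x j * (walsh n x a * (1 + walsh n x m))"
      by (simp add: walsh_xor algebra_simps)
    ultimately show ?thesis
      using True assms m aj restricted_error_sign[OF e True, of j]
      by (simp add: U_diag_def hadamard_n_ket_pair xor_nat_less_two_power mult_ac m_def)
  qed (simp add: U_diag_def hadamard_n_def)
qed

theorem lemma2:
  fixes n j :: nat and z :: "nat \<Rightarrow> bool"
  assumes "n \<ge> 1" and "j < 2^n div 2" and "z \<in> Xi_tilde n j"
  shows "hadamard_n n (U_diag n z (hadamard_n n (\<lambda>x. spin_ket n (1/2) x + spin_ket n (-1/2) x)))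
       = (\<lambda>x. spin_ket n (1/2 + real j) x + spin_ket n (-1/2 - real j) x)"
proof -
  obtain e where z: "z = xor_str n (hadamard_codeword n j) e"
    and e: "preceq n e (hadamard_codeword n (2^n - 1))"
    using assms(3) unfolding Xi_tilde_def by blast
  define p :: nat where "p = 2^(n - 1)"
  have N: "2^n = 2 * p"
    using assms(1) unfolding p_def by (cases n) simp_all
  then have jp: "j < p"
    using assms(2) by simp
  have "and p j = 0"
    using jp bit_nat_less_two_power[of j "n - 1"]
    by (intro bit_eqI) (auto simp: p_def bit_and_iff bit_exp_iff)
  then have pj: "xor p j = p + j"
    by (simp add: disjunctive_add_eq_xor)
  have pm: "xor p (2^n - 1) = p - 1" and pjm: "xor (p + j) (2^n - 1) = p - 1 - j"
    using add_xor_mask_nat[of p n] add_xor_mask_nat[of "p + j" n] N jp by simp_all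
  have Nr: "(2::real)^n = 2 * real p"
    using N by (metis of_nat_numeral of_nat_mult of_nat_power)
  have kets: "spin_ket n (1/2) = ket p" "spin_ket n (-1/2) = ket (p - 1)"
    "spin_ket n (1/2 + real j) = ket (p + j)" "spin_ket n (-1/2 - real j) = ket (p - 1 - j)"
    using N Nr jp by (auto intro!: spin_ket_eq_ket simp: field_simps)
  have "p < 2^n" "j < 2^n" "p + j < 2^n"
    using N jp by simp_all
  then have flip: "U_diag n z (hadamard_n n (\<lambda>x. ket p x + ket (p - 1) x))
      = hadamard_n n (\<lambda>x. ket (p + j) x + ket (p - 1 - j) x)"
    using U_diag_hadamard_pair[OF e, of p j] by (simp only: z pm pj pjm)
  have involution: "hadamard_n n (hadamard_n n (\<lambda>x. ket (p + j) x + ket (p - 1 - j) x))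
      = (\<lambda>x. ket (p + j) x + ket (p - 1 - j) x)"
    using \<open>p + j < 2^n\<close> by (intro hadamard_n_involutive) (auto simp: ket_def)
  show ?thesis
    unfolding kets flip by (rule involution)
qed

end
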